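(* Let $\Bbbk$ be an algebraically closed field and $A$ a local finite dimensional $\Bbbk$-algebra. Then $\operatorname{HHdim} T(A)=\infty$.
   Context: $T(A)=A\ltimes DA$ is the trivial extension: the vector space $A\oplus DA$, where $DA=\operatorname{Hom}_\Bbbk(A,\Bbbk)$ with its natural bimodule structure, with multiplication $(a,f)(b,g)=(ab,ag+fb)$. For a finite dimensional algebra $B$, $\operatorname{HH}_n(B)=\operatorname{Tor}^{B\otimes_\Bbbk B^{\mathrm{op}}}_n(B,B)$ is the $n$-th Hochschild homology group, and $\operatorname{HHdim}B=\sup\{n\mid \operatorname{HH}_n(B)\neq 0\}$. *)

theory Defs
  imports "HOL-Computational_Algebra.Polynomial"
begin

text \<open>A finite dimensional algebra over a field 'k is presented by a basis indexed by a
finite type 'i and structure constants c, meaning e_i * e_j = sum_l c i j l e_l.\<close>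

definition amul :: "('i::finite \<Rightarrow> 'i \<Rightarrow> 'i \<Rightarrow> 'k::field) \<Rightarrow> ('i \<Rightarrow> 'k) \<Rightarrow> ('i \<Rightarrow> 'k) \<Rightarrow> ('i \<Rightarrow> 'k)" where
  "amul c x y = (\<lambda>l. \<Sum>i\<in>UNIV. \<Sum>j\<in>UNIV. x i * y j * c i j l)"

definition is_unit_elem :: "('i::finite \<Rightarrow> 'i \<Rightarrow> 'i \<Rightarrow> 'k::field) \<Rightarrow> ('i \<Rightarrow> 'k) \<Rightarrow> bool" where
  "is_unit_elem c u \<longleftrightarrow> (\<forall>x. amul c u x = x \<and> amul c x u = x)"

definition fd_algebra :: "('i::finite \<Rightarrow> 'i \<Rightarrow> 'i \<Rightarrow> 'k::field) \<Rightarrow> bool" where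
  "fd_algebra c \<longleftrightarrow> (\<forall>x y z. amul c (amul c x y) z = amul c x (amul c y z))
                     \<and> (\<exists>u. is_unit_elem c u)"

definition invertible_elem :: "('i::finite \<Rightarrow> 'i \<Rightarrow> 'i \<Rightarrow> 'k::field) \<Rightarrow> ('i \<Rightarrow> 'k) \<Rightarrow> bool" where
  "invertible_elem c x \<longleftrightarrow> (\<exists>u y. is_unit_elem c u \<and> amul c x y = u \<and> amul c y x = u)"

text \<open>Local ring: nonzero, and the non-invertible elements are closed under addition
(equivalently: they form the unique maximal (two-sided) ideal).\<close>
definition local_algebra :: "('i::finite \<Rightarrow> 'i \<Rightarrow> 'i \<Rightarrow> 'k::field) \<Rightarrow> bool" where
  "local_algebra c \<longleftrightarrow> fd_algebra c \<and> (\<forall>u. is_unit_elem c u \<longrightarrow> u \<noteq> (\<lambda>_. 0))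
     \<and> (\<forall>x y. \<not> invertible_elem c x \<longrightarrow> \<not> invertible_elem c y \<longrightarrow> \<not> invertible_elem c (\<lambda>i. x i + y i))"

text \<open>Trivial extension T(A) = A \<ltimes> DA. Basis: Inl i = e_i of A, Inr j = dual basis e_j^* of DA.
(a,f)(b,g) = (ab, ag + fb) with (a g)(x) = g(x a), (f b)(x) = f(b x). Hence
e_i e_j^* = sum_m c m i j e_m^*, e_j^* e_i = sum_m c i m j e_m^*, e^* e^* = 0.\<close>
fun triv_ext :: "('i::finite \<Rightarrow> 'i \<Rightarrow> 'i \<Rightarrow> 'k::field) \<Rightarrow> ('i + 'i) \<Rightarrow> ('i + 'i) \<Rightarrow> ('i + 'i) \<Rightarrow> 'k" where
  "triv_ext c (Inl i) (Inl j) (Inl l) = c i j l"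
| "triv_ext c (Inl i) (Inl j) (Inr l) = 0"
| "triv_ext c (Inl i) (Inr j) (Inr m) = c m i j"
| "triv_ext c (Inl i) (Inr j) (Inl m) = 0"
| "triv_ext c (Inr j) (Inl i) (Inr m) = c i m j"
| "triv_ext c (Inr j) (Inl i) (Inl m) = 0"
| "triv_ext c (Inr j) (Inr i) l = 0"

text \<open>Hochschild complex: C_n(B) = B^{\<otimes>(n+1)}, with coordinates w.r.t. basis tensors
e_{w_0} \<otimes> ... \<otimes> e_{w_n} indexed by lists w of length n+1.\<close>
definition hchains :: "nat \<Rightarrow> ('i list \<Rightarrow> 'k::field) set" where
  "hchains n = {x. \<forall>w. length w \<noteq> n + 1 \<longrightarrow> x w = 0}"

text \<open>Coefficient of basis tensor v in b_n(e_w), for w of length n+1: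
b(a_0\<otimes>..\<otimes>a_n) = sum_{i<n} (-1)^i a_0\<otimes>..\<otimes>a_i a_{i+1}\<otimes>..\<otimes>a_n
                 + (-1)^n a_n a_0 \<otimes> a_1 \<otimes> .. \<otimes> a_{n-1}.\<close>
definition hbd_coeff :: "('i::finite \<Rightarrow> 'i \<Rightarrow> 'i \<Rightarrow> 'k::field) \<Rightarrow> nat \<Rightarrow> 'i list \<Rightarrow> 'i list \<Rightarrow> 'k" where
  "hbd_coeff c n w v =
     (\<Sum>i<n. (-1) ^ i * (\<Sum>l\<in>UNIV. if v = take i w @ [l] @ drop (i + 2) w
                                     then c (w ! i) (w ! (i + 1)) l else 0))
   + (-1) ^ n * (\<Sum>l\<in>UNIV. if v = l # take (n - 1) (drop 1 w) then c (w ! n) (w ! 0) l else 0)"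

definition hbd :: "('i::finite \<Rightarrow> 'i \<Rightarrow> 'i \<Rightarrow> 'k::field) \<Rightarrow> nat \<Rightarrow> ('i list \<Rightarrow> 'k) \<Rightarrow> ('i list \<Rightarrow> 'k)" where
  "hbd c n x = (\<lambda>v. if length v = n then
        (\<Sum>w\<in>{w. length w = n + 1}. x w * hbd_coeff c n w v) else 0)"

definition HH_nonzero :: "('i::finite \<Rightarrow> 'i \<Rightarrow> 'i \<Rightarrow> 'k::field) \<Rightarrow> nat \<Rightarrow> bool" where
  "HH_nonzero c n \<longleftrightarrow> (\<exists>z \<in> hchains n. (n = 0 \<or> hbd c n z = (\<lambda>_. 0))
        \<and> \<not> (\<exists>y \<in> hchains (Suc n). hbd c (Suc n) y = z))"

definition HHdim_infinite :: "('i::finite \<Rightarrow> 'i \<Rightarrow> 'i \<Rightarrow> 'k::field) \<Rightarrow> bool" where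
  "HHdim_infinite c \<longleftrightarrow> (\<forall>N. \<exists>n\<ge>N. HH_nonzero c n)"

end

theory Submission
  imports Defs "HOL-Library.Function_Algebras" "Jordan_Normal_Form.Char_Poly"
begin

(* Since A is local and the field is algebraically closed, every basis element e_i is congruent
   to a scalar h_i modulo the maximal ideal m, and an induction on dimension gives s \<noteq> 0 with
   m s = s m = 0; hence e_i s = s e_i = h_i s. On T(A) the functional \<lambda>(a, f) = f(s) then
   satisfies \<lambda>(xy) = \<alpha>(x) \<lambda>(y) + \<lambda>(x) \<alpha>(y) for the augmentation \<alpha>(a, f) = h(a). Therefore
   the cochain x_0 \<otimes> ... \<otimes> x_n \<mapsto> \<lambda>(x_0) ... \<lambda>(x_n) vanishes on all boundaries when n is
   even: the face terms telescope and the cyclic term cancels the rest. It takes the value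
   s_j^(n+1) \<noteq> 0 on the chain e_j^* \<otimes> ... \<otimes> e_j^* of length n + 1, which is a cycle
   because DA DA = 0. *)

definition fscale :: "'k::field \<Rightarrow> ('i \<Rightarrow> 'k) \<Rightarrow> 'i \<Rightarrow> 'k" where
  "fscale a f = (\<lambda>i. a * f i)"

definition basis_fun :: "'i \<Rightarrow> 'i \<Rightarrow> 'k::field" where
  "basis_fun j = (\<lambda>i. if i = j then 1 else 0)"

interpretation fun_vs: vector_space "fscale :: 'k::field \<Rightarrow> ('i \<Rightarrow> 'k) \<Rightarrow> 'i \<Rightarrow> 'k"
  by unfold_locales (auto simp: fscale_def fun_eq_iff algebra_simps)

lemma sum_fun_apply: "sum g A i = (\<Sum>j\<in>A. g j i)"
  by (induct A rule: infinite_finite_induct) auto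

lemma sum_basis_fun_mult:
  fixes f :: "'i::finite \<Rightarrow> 'k::field"
  shows "(\<Sum>j\<in>UNIV. basis_fun i j * f j) = f i"
  by (simp add: basis_fun_def if_distrib[of "\<lambda>x. x * _"] cong: if_cong)

lemma basis_fun_expansion:
  fixes f :: "'i::finite \<Rightarrow> 'k::field"
  shows "(\<Sum>j\<in>UNIV. fscale (f j) (basis_fun j)) = f"
  by (simp add: fun_eq_iff sum_fun_apply fscale_def basis_fun_def if_distrib[of "\<lambda>x. _ * x"]
      cong: if_cong)

lemma inj_basis_fun: "inj (basis_fun :: 'i \<Rightarrow> 'i \<Rightarrow> 'k::field)"
proof
  fix a b :: 'i
  assume "basis_fun a = (basis_fun b :: 'i \<Rightarrow> 'k)"
  hence "basis_fun a a = (basis_fun b a :: 'k)" by simp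
  thus "a = b" by (simp add: basis_fun_def split: if_splits)
qed

interpretation fun_fdvs: finite_dimensional_vector_space
  "fscale :: 'k::field \<Rightarrow> ('i::finite \<Rightarrow> 'k) \<Rightarrow> 'i \<Rightarrow> 'k" "range basis_fun"
proof unfold_locales
  show "fun_vs.independent (range (basis_fun :: 'i \<Rightarrow> 'i \<Rightarrow> 'k))"
  proof (rule fun_vs.independent_if_scalars_zero)
    fix u :: "('i \<Rightarrow> 'k) \<Rightarrow> 'k" and v :: "'i \<Rightarrow> 'k"
    assume h: "(\<Sum>v\<in>range basis_fun. fscale (u v) v) = 0" and "v \<in> range basis_fun"
    then obtain j :: 'i where v: "v = basis_fun j" by auto
    have "(\<Sum>i\<in>UNIV. fscale (u (basis_fun i)) (basis_fun i :: 'i \<Rightarrow> 'k)) = 0"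
      using h by (simp add: sum.reindex inj_basis_fun)
    hence "u (basis_fun j) = 0"
      by (simp add: basis_fun_expansion[of "\<lambda>i. u (basis_fun i)", simplified] fun_eq_iff)
    thus "u v = 0" using v by simp
  qed simp
  have "f \<in> fun_vs.span (range basis_fun)" for f :: "'i \<Rightarrow> 'k"
    by (subst basis_fun_expansion[symmetric])
      (intro fun_vs.span_sum fun_vs.span_scale fun_vs.span_base; simp)
  thus "fun_vs.span (range (basis_fun :: 'i \<Rightarrow> 'i \<Rightarrow> 'k)) = UNIV" by auto
qed simp

lemma amul_add_left: "amul c (x + y) z = amul c x z + amul c y z"
  by (simp add: amul_def fun_eq_iff algebra_simps sum.distrib)

lemma amul_add_right: "amul c x (y + z) = amul c x y + amul c x z"
  by (simp add: amul_def fun_eq_iff algebra_simps sum.distrib)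

lemma amul_diff_left: "amul c (x - y) z = amul c x z - amul c y z"
  by (simp add: amul_def fun_eq_iff algebra_simps sum_subtractf)

lemma amul_fscale_left: "amul c (fscale a x) y = fscale a (amul c x y)"
  by (simp add: amul_def fun_eq_iff fscale_def sum_distrib_left algebra_simps)

lemma amul_fscale_right: "amul c x (fscale a y) = fscale a (amul c x y)"
  by (simp add: amul_def fun_eq_iff fscale_def sum_distrib_left algebra_simps)

lemma amul_zero_left [simp]: "amul c 0 y = 0"
  by (simp add: amul_def fun_eq_iff)

lemma amul_zero_right [simp]: "amul c x 0 = 0"
  by (simp add: amul_def fun_eq_iff)

lemma linear_amul: "Vector_Spaces.linear fscale fscale (amul c x)"
  using fun_vs.vector_space_axioms
  by (simp add: Vector_Spaces.linear_iff amul_add_right amul_fscale_right)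

lemma amul_basis_fun_left: "amul c (basis_fun i) y j = (\<Sum>m\<in>UNIV. c i m j * y m)"
proof -
  have "amul c (basis_fun i) y j = (\<Sum>a\<in>UNIV. basis_fun i a * (\<Sum>b\<in>UNIV. c a b j * y b))"
    by (simp add: amul_def sum_distrib_left mult_ac)
  thus ?thesis by (simp only: sum_basis_fun_mult)
qed

lemma amul_basis_fun_right: "amul c y (basis_fun i) j = (\<Sum>m\<in>UNIV. c m i j * y m)"
proof -
  have "amul c y (basis_fun i) j = (\<Sum>a\<in>UNIV. y a * (\<Sum>b\<in>UNIV. basis_fun i b * c a b j))"
    by (simp add: amul_def sum_distrib_left mult_ac)
  thus ?thesis by (simp add: sum_basis_fun_mult mult_ac)
qed

definition opp_alg :: "('i \<Rightarrow> 'i \<Rightarrow> 'i \<Rightarrow> 'k) \<Rightarrow> 'i \<Rightarrow> 'i \<Rightarrow> 'i \<Rightarrow> 'k" where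
  "opp_alg c = (\<lambda>i j l. c j i l)"

lemma amul_opp_alg: "amul (opp_alg c) x y = amul c y x"
  unfolding amul_def opp_alg_def fun_eq_iff by (subst sum.swap) (simp add: mult_ac)

lemma is_unit_elem_opp_alg: "is_unit_elem (opp_alg c) u \<longleftrightarrow> is_unit_elem c u"
  by (auto simp: is_unit_elem_def amul_opp_alg)

lemma invertible_elem_opp_alg: "invertible_elem (opp_alg c) x \<longleftrightarrow> invertible_elem c x"
  by (auto simp: invertible_elem_def amul_opp_alg is_unit_elem_opp_alg)

lemma local_algebra_opp_alg: "local_algebra c \<Longrightarrow> local_algebra (opp_alg c)"
  unfolding local_algebra_def fd_algebra_def
  by (simp add: amul_opp_alg is_unit_elem_opp_alg invertible_elem_opp_alg)
    (blast intro: is_unit_elem_opp_alg[THEN iffD2])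

lemma left_mult_has_eigenvector:
  fixes c :: "'i::finite \<Rightarrow> 'i \<Rightarrow> 'i \<Rightarrow> 'k::alg_closed_field"
  obtains k y where "y \<noteq> 0" "amul c a y = fscale k y"
proof -
  define n where "n = card (UNIV :: 'i set)"
  obtain e where e: "bij_betw e {0..<n} (UNIV :: 'i set)"
    using ex_bij_betw_nat_finite[of "UNIV :: 'i set"] unfolding n_def by auto
  define A where "A = mat n n (\<lambda>(r, q). \<Sum>i\<in>UNIV. a i * c i (e q) (e r))"
  have A: "A \<in> carrier_mat n n" unfolding A_def by simp
  have "degree (char_poly A) > 0"
    using degree_monic_char_poly[OF A] by (simp add: n_def finite_UNIV_card_ge_0)
  then obtain k where "poly (char_poly A) k = 0" using alg_closed_imp_poly_has_root by blast
  hence "eigenvalue A k" using eigenvalue_root_char_poly[OF A] by simp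
  then obtain v where v: "v \<in> carrier_vec n" "v \<noteq> 0\<^sub>v n" "A *\<^sub>v v = k \<cdot>\<^sub>v v"
    using A unfolding eigenvalue_def eigenvector_def by auto
  define y where "y j = v $ the_inv_into {0..<n} e j" for j
  have y_e: "y (e q) = v $ q" if "q < n" for q
    unfolding y_def using that e by (simp add: bij_betw_def the_inv_into_f_f)
  have "amul c a y = fscale k y"
  proof
    fix l
    obtain r where r: "r < n" "l = e r"
      using e by (metis atLeastLessThan_iff bij_betw_iff_bijections UNIV_I)
    have "amul c a y l = (\<Sum>j\<in>UNIV. (\<Sum>i\<in>UNIV. a i * c i j l) * y j)"
      unfolding amul_def by (subst sum.swap) (simp add: sum_distrib_left sum_distrib_right mult_ac)
    also have "\<dots> = (\<Sum>q\<in>{0..<n}. (\<Sum>i\<in>UNIV. a i * c i (e q) l) * y (e q))"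
      by (rule sum.reindex_bij_betw[OF e, symmetric])
    also have "\<dots> = (A *\<^sub>v v) $ r"
      using r v(1) y_e by (simp add: A_def scalar_prod_def)
    also have "\<dots> = k * y l" using v r y_e by simp
    finally show "amul c a y l = fscale k y l" by (simp add: fscale_def)
  qed
  moreover have "y \<noteq> 0"
  proof
    assume "y = 0"
    hence "v = 0\<^sub>v n" using v(1) y_e by (intro eq_vecI) (auto simp: fun_eq_iff)
    thus False using v(2) by simp
  qed
  ultimately show ?thesis using that by blast
qed

locale local_fd_algebra =
  fixes c :: "'i::finite \<Rightarrow> 'i \<Rightarrow> 'i \<Rightarrow> 'k::field"
  assumes local: "local_algebra c"
begin

lemma amul_assoc: "amul c (amul c x y) z = amul c x (amul c y z)"
  using local by (simp add: local_algebra_def fd_algebra_def)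

definition one_elem :: "'i \<Rightarrow> 'k" where
  "one_elem = (SOME u. is_unit_elem c u)"

lemma is_unit_elem_one_elem: "is_unit_elem c one_elem"
proof -
  from local obtain u where "is_unit_elem c u" by (auto simp: local_algebra_def fd_algebra_def)
  thus ?thesis unfolding one_elem_def by (rule someI[where P = "is_unit_elem c"])
qed

lemma amul_one_elem_left [simp]: "amul c one_elem x = x"
  and amul_one_elem_right [simp]: "amul c x one_elem = x"
  using is_unit_elem_one_elem by (auto simp: is_unit_elem_def)

lemma is_unit_elem_eq_one_elem:
  assumes "is_unit_elem c u" shows "u = one_elem"
proof -
  have "amul c u one_elem = one_elem" using assms unfolding is_unit_elem_def by blast
  thus ?thesis by simp
qed

lemma one_elem_neq_zero: "one_elem \<noteq> 0"
proof -
  have "\<forall>u. is_unit_elem c u \<longrightarrow> u \<noteq> (\<lambda>_. 0)" using local by (simp add: local_algebra_def)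
  thus ?thesis using is_unit_elem_one_elem by (simp add: zero_fun_def)
qed

lemma invertible_elem_iff: "invertible_elem c x \<longleftrightarrow> (\<exists>y. amul c x y = one_elem \<and> amul c y x = one_elem)"
  unfolding invertible_elem_def using is_unit_elem_one_elem is_unit_elem_eq_one_elem by metis

definition max_ideal :: "('i \<Rightarrow> 'k) set" where
  "max_ideal = {x. \<not> invertible_elem c x}"

lemma one_elem_notin_max_ideal: "one_elem \<notin> max_ideal"
  unfolding max_ideal_def invertible_elem_iff using amul_one_elem_left[of one_elem] by blast

lemma zero_in_max_ideal: "0 \<in> max_ideal"
  unfolding max_ideal_def invertible_elem_iff using one_elem_neq_zero by auto

lemma add_in_max_ideal: "x \<in> max_ideal \<Longrightarrow> y \<in> max_ideal \<Longrightarrow> x + y \<in> max_ideal"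
  using local by (simp add: local_algebra_def max_ideal_def plus_fun_def)

lemma fscale_in_max_ideal:
  assumes "x \<in> max_ideal" shows "fscale a x \<in> max_ideal"
proof (rule ccontr)
  assume "fscale a x \<notin> max_ideal"
  then obtain y where "amul c (fscale a x) y = one_elem" "amul c y (fscale a x) = one_elem"
    by (auto simp: max_ideal_def invertible_elem_iff)
  hence "amul c x (fscale a y) = one_elem" "amul c (fscale a y) x = one_elem"
    by (simp_all add: amul_fscale_left amul_fscale_right)
  thus False using assms by (auto simp: max_ideal_def invertible_elem_iff)
qed

lemma right_inverse_imp_left_inverse:
  assumes "amul c x y = one_elem" shows "amul c y x = one_elem"
proof -
  have "amul c x \<circ> amul c y = id"
    unfolding comp_def fun_eq_iff by (simp add: amul_assoc[symmetric] assms)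
  hence "amul c y \<circ> amul c x = id"
    using fun_fdvs.linear_inverse_left[OF linear_amul linear_amul] by blast
  hence "amul c y (amul c x one_elem) = one_elem" by (metis comp_apply id_apply)
  thus ?thesis by simp
qed

lemma amul_mem_max_ideal:
  assumes "x \<in> max_ideal" shows "amul c a x \<in> max_ideal"
proof (rule ccontr)
  assume "amul c a x \<notin> max_ideal"
  then obtain y where "amul c y (amul c a x) = one_elem"
    by (auto simp: max_ideal_def invertible_elem_iff)
  hence "amul c (amul c y a) x = one_elem" by (simp add: amul_assoc)
  with right_inverse_imp_left_inverse have "invertible_elem c x"
    by (auto simp: invertible_elem_iff)
  thus False using assms by (simp add: max_ideal_def)
qed

lemma one_elem_minus_notin_max_ideal: "x \<in> max_ideal \<Longrightarrow> one_elem - x \<notin> max_ideal"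
  using add_in_max_ideal[of x "one_elem - x"] one_elem_notin_max_ideal by auto

lemma eq_zero_if_amul_nonunit_eq_zero:
  assumes "z \<notin> max_ideal" "amul c z y = 0" shows "y = 0"
proof -
  obtain w where "amul c w z = one_elem"
    using assms(1) by (auto simp: max_ideal_def invertible_elem_iff)
  hence "y = amul c w (amul c z y)" by (simp add: amul_assoc[symmetric])
  thus ?thesis using assms(2) by simp
qed

lemma left_annihilated_in_stable_subspace:
  assumes "fun_vs.subspace K" "y \<in> K" "y \<noteq> 0"
    and "\<forall>x\<in>max_ideal. \<forall>z\<in>K. amul c x z \<in> K"
  shows "\<exists>s\<in>K. s \<noteq> 0 \<and> (\<forall>x\<in>max_ideal. amul c x s = 0)"
  using assms
proof (induction "fun_vs.dim K" arbitrary: K y rule: less_induct)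
  case less
  show ?case
  proof (cases "\<forall>x\<in>max_ideal. amul c x y = 0")
    case True
    then show ?thesis using less.prems by blast
  next
    case False
    then obtain x0 where x0: "x0 \<in> max_ideal" "amul c x0 y \<noteq> 0" by blast
    define K' where "K' = (\<lambda>x. amul c x y) ` max_ideal"
    have subspace: "fun_vs.subspace K'"
    proof (rule fun_vs.subspaceI)
      show "0 \<in> K'" unfolding K'_def using zero_in_max_ideal by force
      show "a + b \<in> K'" if "a \<in> K'" "b \<in> K'" for a b
        using that add_in_max_ideal unfolding K'_def by (auto simp flip: amul_add_left)
      show "fscale k a \<in> K'" if "a \<in> K'" for k a
        using that fscale_in_max_ideal unfolding K'_def by (auto simp flip: amul_fscale_left)
    qed
    have sub: "K' \<subseteq> K" using less.prems(2,4) unfolding K'_def by auto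
    have stable: "\<forall>x\<in>max_ideal. \<forall>z\<in>K'. amul c x z \<in> K'"
      unfolding K'_def using amul_mem_max_ideal by (auto simp: amul_assoc[symmetric])
    have "K' \<noteq> K"
    proof
      assume "K' = K"
      then obtain x where x: "x \<in> max_ideal" "y = amul c x y"
        using less.prems(2) unfolding K'_def by auto
      have "amul c (one_elem - x) y = 0" using x(2) by (simp add: amul_diff_left)
      with one_elem_minus_notin_max_ideal[OF x(1)] have "y = 0"
        by (rule eq_zero_if_amul_nonunit_eq_zero)
      thus False using less.prems(3) by simp
    qed
    with sub subspace less.prems(1) have "fun_vs.dim K' < fun_vs.dim K"
      by (intro fun_fdvs.dim_psubset) (simp add: fun_vs.span_eq_iff[THEN iffD2])
    moreover have "amul c x0 y \<in> K'" unfolding K'_def using x0 by auto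
    ultimately show ?thesis using less.hyps[OF _ subspace _ x0(2) stable] sub by blast
  qed
qed

lemma eigenvalue_shift_in_max_ideal:
  assumes "y \<noteq> 0" "amul c a y = fscale k y"
  shows "a - fscale k one_elem \<in> max_ideal"
proof (rule ccontr)
  assume "a - fscale k one_elem \<notin> max_ideal"
  moreover have "amul c (a - fscale k one_elem) y = 0"
    using assms(2) by (simp add: amul_diff_left amul_fscale_left)
  ultimately show False using assms(1) eq_zero_if_amul_nonunit_eq_zero by blast
qed

lemma two_sided_annihilated_exists:
  obtains s where "s \<noteq> 0" "\<And>x. x \<in> max_ideal \<Longrightarrow> amul c x s = 0"
    "\<And>x. x \<in> max_ideal \<Longrightarrow> amul c s x = 0"
proof -
  interpret opp: local_fd_algebra "opp_alg c"
    using local_algebra_opp_alg[OF local] by unfold_locales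
  have opp_max_ideal: "opp.max_ideal = max_ideal"
    by (simp add: opp.max_ideal_def max_ideal_def invertible_elem_opp_alg)
  \<comment> \<open>The left annihilator K of m is stable under right multiplication, so the opposite
     algebra yields a vector of K that m also annihilates from the right.\<close>
  define K where "K = {y. \<forall>x\<in>max_ideal. amul c x y = 0}"
  have K: "fun_vs.subspace K"
    by (rule fun_vs.subspaceI) (auto simp: K_def amul_add_right amul_fscale_right fun_vs.scale_zero_right)
  obtain y where "y \<in> K" "y \<noteq> 0"
    using left_annihilated_in_stable_subspace[OF fun_vs.subspace_UNIV _ one_elem_neq_zero]
    by (auto simp: K_def)
  moreover have "\<forall>x\<in>opp.max_ideal. \<forall>z\<in>K. amul (opp_alg c) x z \<in> K"
    by (simp add: K_def opp_max_ideal amul_opp_alg amul_assoc[symmetric])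
  ultimately obtain s where "s \<in> K" "s \<noteq> 0" "\<forall>x\<in>opp.max_ideal. amul (opp_alg c) x s = 0"
    using opp.left_annihilated_in_stable_subspace[OF K] by blast
  thus ?thesis using that by (auto simp: K_def opp_max_ideal amul_opp_alg)
qed

end

definition two_sided_eigenvector ::
  "('i::finite \<Rightarrow> 'i \<Rightarrow> 'i \<Rightarrow> 'k::field) \<Rightarrow> ('i \<Rightarrow> 'k) \<Rightarrow> ('i \<Rightarrow> 'k) \<Rightarrow> bool" where
  "two_sided_eigenvector c s h \<longleftrightarrow>
     (\<forall>i. amul c (basis_fun i) s = fscale (h i) s \<and> amul c s (basis_fun i) = fscale (h i) s)"

lemma local_algebra_two_sided_eigenvector:
  fixes c :: "'i::finite \<Rightarrow> 'i \<Rightarrow> 'i \<Rightarrow> 'k::alg_closed_field"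
  assumes "local_algebra c"
  obtains s h where "s \<noteq> 0" "two_sided_eigenvector c s h"
proof -
  interpret local_fd_algebra c using assms by unfold_locales
  obtain s where s: "s \<noteq> 0" "\<And>x. x \<in> max_ideal \<Longrightarrow> amul c x s = 0"
    "\<And>x. x \<in> max_ideal \<Longrightarrow> amul c s x = 0"
    by (rule two_sided_annihilated_exists) auto
  have "\<exists>k. basis_fun i - fscale k one_elem \<in> max_ideal" for i
    using left_mult_has_eigenvector[of c "basis_fun i"] eigenvalue_shift_in_max_ideal by metis
  then obtain h where h: "\<And>i. basis_fun i - fscale (h i) one_elem \<in> max_ideal" by metis
  have "amul c (basis_fun i) s = fscale (h i) s" for i
  proof -
    have "amul c (basis_fun i) s
        = amul c (basis_fun i - fscale (h i) one_elem) s + amul c (fscale (h i) one_elem) s"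
      by (simp flip: amul_add_left)
    thus ?thesis using s(2)[OF h] by (simp add: amul_fscale_left)
  qed
  moreover have "amul c s (basis_fun i) = fscale (h i) s" for i
  proof -
    have "amul c s (basis_fun i)
        = amul c s (basis_fun i - fscale (h i) one_elem) + amul c s (fscale (h i) one_elem)"
      by (simp flip: amul_add_right)
    thus ?thesis using s(3)[OF h] by (simp add: amul_fscale_right)
  qed
  ultimately have "two_sided_eigenvector c s h" by (simp add: two_sided_eigenvector_def)
  with s(1) show ?thesis by (rule that)
qed

(* In the basis Inl i = e_i, Inr j = e_j^* of T(A): dual_eval s is (a, f) \<mapsto> f(s) and aug h is
   (a, f) \<mapsto> h(a), the functions \<lambda> and \<alpha> of the proof idea. *)
fun dual_eval :: "('i \<Rightarrow> 'k::field) \<Rightarrow> 'i + 'i \<Rightarrow> 'k" where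
  "dual_eval s (Inl i) = 0"
| "dual_eval s (Inr j) = s j"

fun aug :: "('i \<Rightarrow> 'k::field) \<Rightarrow> 'i + 'i \<Rightarrow> 'k" where
  "aug h (Inl i) = h i"
| "aug h (Inr j) = 0"

definition tensor_eval :: "('i \<Rightarrow> 'k::field) \<Rightarrow> ('i + 'i) list \<Rightarrow> 'k" where
  "tensor_eval s v = (\<Prod>x\<leftarrow>v. dual_eval s x)"

lemma tensor_eval_Nil [simp]: "tensor_eval s [] = 1"
  and tensor_eval_Cons [simp]: "tensor_eval s (x # v) = dual_eval s x * tensor_eval s v"
  and tensor_eval_append [simp]: "tensor_eval s (v @ v') = tensor_eval s v * tensor_eval s v'"
  by (simp_all add: tensor_eval_def)

definition tensor_aug_at :: "('i \<Rightarrow> 'k::field) \<Rightarrow> ('i \<Rightarrow> 'k) \<Rightarrow> ('i + 'i) list \<Rightarrow> nat \<Rightarrow> 'k" where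
  "tensor_aug_at s h w p = tensor_eval s (take p w) * aug h (w ! p) * tensor_eval s (drop (Suc p) w)"

lemma sum_UNIV_Plus:
  fixes g :: "'a::finite + 'b::finite \<Rightarrow> 'k::comm_monoid_add"
  shows "(\<Sum>l\<in>UNIV. g l) = (\<Sum>i\<in>UNIV. g (Inl i)) + (\<Sum>j\<in>UNIV. g (Inr j))"
  using sum.Plus[of "UNIV :: 'a set" "UNIV :: 'b set" g] by (simp add: comp_def)

lemma dual_eval_triv_ext_mult:
  assumes "two_sided_eigenvector c s h"
  shows "(\<Sum>l\<in>UNIV. triv_ext c a b l * dual_eval s l) = aug h a * dual_eval s b + dual_eval s a * aug h b"
proof -
  have "(\<Sum>m\<in>UNIV. s m * c i m j) = h i * s j" and "(\<Sum>m\<in>UNIV. s m * c m i j) = h i * s j" for i j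
    using assms amul_basis_fun_left[of c i s j] amul_basis_fun_right[of c s i j]
    by (auto simp: two_sided_eigenvector_def fscale_def fun_eq_iff mult.commute)
  thus ?thesis by (cases a; cases b) (simp_all add: sum_UNIV_Plus mult.commute)
qed

lemma tensor_eval_face:
  assumes "two_sided_eigenvector c s h" "length w = Suc (Suc n)" "i < Suc n"
  shows "(\<Sum>l\<in>UNIV. triv_ext c (w ! i) (w ! (i + 1)) l * tensor_eval s (take i w @ [l] @ drop (i + 2) w))
     = tensor_aug_at s h w i + tensor_aug_at s h w (Suc i)"
proof -
  have drop: "drop (Suc i) w = w ! Suc i # drop (i + 2) w"
    using assms(2,3) by (simp add: Cons_nth_drop_Suc)
  have take: "take (Suc i) w = take i w @ [w ! i]"
    using assms(2,3) by (simp add: take_Suc_conv_app_nth)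
  have "(\<Sum>l\<in>UNIV. triv_ext c (w ! i) (w ! (i + 1)) l * tensor_eval s (take i w @ [l] @ drop (i + 2) w))
      = tensor_eval s (take i w) * (\<Sum>l\<in>UNIV. triv_ext c (w ! i) (w ! (i + 1)) l * dual_eval s l)
        * tensor_eval s (drop (i + 2) w)"
    by (simp add: sum_distrib_left sum_distrib_right algebra_simps)
  also have "\<dots> = tensor_aug_at s h w i + tensor_aug_at s h w (Suc i)"
    unfolding dual_eval_triv_ext_mult[OF assms(1)] tensor_aug_at_def drop take
    by (simp add: algebra_simps)
  finally show ?thesis .
qed

lemma tensor_eval_cyclic_face:
  assumes "two_sided_eigenvector c s h" "length w = Suc (Suc n)"
  shows "(\<Sum>l\<in>UNIV. triv_ext c (w ! Suc n) (w ! 0) l * tensor_eval s (l # take n (drop 1 w)))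
     = tensor_aug_at s h w (Suc n) + tensor_aug_at s h w 0"
proof -
  obtain a w' where w: "w = a # take n w' @ [w' ! n]" "length w' = Suc n"
    using assms(2) by (cases w) (auto simp: take_Suc_conv_app_nth[symmetric])
  have "(\<Sum>l\<in>UNIV. triv_ext c (w ! Suc n) (w ! 0) l * tensor_eval s (l # take n (drop 1 w)))
      = (\<Sum>l\<in>UNIV. triv_ext c (w ! Suc n) (w ! 0) l * dual_eval s l) * tensor_eval s (take n (drop 1 w))"
    by (simp add: sum_distrib_right mult.assoc)
  also have "\<dots> = tensor_aug_at s h w (Suc n) + tensor_aug_at s h w 0"
    unfolding dual_eval_triv_ext_mult[OF assms(1)]
    by (simp add: w tensor_aug_at_def nth_append algebra_simps)
  finally show ?thesis .
qed

lemma sum_delta_mult: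
  fixes P :: "'a \<Rightarrow> 'k::comm_ring_1"
  assumes "finite V" "\<And>l. f l \<in> V"
  shows "(\<Sum>v\<in>V. (\<Sum>l\<in>UNIV. if v = f l then g l else 0) * P v) = (\<Sum>l\<in>UNIV. g l * P (f l))"
proof -
  have "(\<Sum>v\<in>V. (\<Sum>l\<in>UNIV. if v = f l then g l else 0) * P v)
      = (\<Sum>l\<in>UNIV. \<Sum>v\<in>V. if v = f l then g l * P v else 0)"
    by (subst sum.swap) (auto simp: sum_distrib_right intro!: sum.cong)
  thus ?thesis using assms by (simp add: sum.delta)
qed

lemma sum_alternating_telescope:
  fixes Q :: "nat \<Rightarrow> 'k::comm_ring_1"
  shows "(\<Sum>i<Suc n. (-1) ^ i * (Q i + Q (Suc i))) = Q 0 + (-1) ^ n * Q (Suc n)"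
  by (induction n) (auto simp: algebra_simps)

lemma finite_lists_of_length: "finite {v :: 'a::finite list. length v = n}"
  using finite_lists_length_eq[of "UNIV :: 'a set" n] by simp

lemma tensor_eval_hbd_coeff:
  assumes eig: "two_sided_eigenvector c s h" and len: "length w = Suc (Suc n)" and "even n"
  shows "(\<Sum>v | length v = Suc n. hbd_coeff (triv_ext c) (Suc n) w v * tensor_eval s v) = 0"
proof -
  let ?V = "{v :: ('i + 'i) list. length v = Suc n}"
  let ?Q = "tensor_aug_at s h w"
  define face where "face i v = (\<Sum>l\<in>UNIV. if v = take i w @ [l] @ drop (i + 2) w
    then triv_ext c (w ! i) (w ! (i + 1)) l else 0)" for i v
  define cyclic where "cyclic v = (\<Sum>l\<in>UNIV. if v = l # take n (drop 1 w)
    then triv_ext c (w ! Suc n) (w ! 0) l else 0)" for v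
  have faces: "(\<Sum>v\<in>?V. (\<Sum>i<Suc n. (-1) ^ i * face i v) * tensor_eval s v)
      = (\<Sum>i<Suc n. (-1) ^ i * (?Q i + ?Q (Suc i)))"
  proof -
    have "(\<Sum>v\<in>?V. (\<Sum>i<Suc n. (-1) ^ i * face i v) * tensor_eval s v)
        = (\<Sum>i<Suc n. (-1) ^ i * (\<Sum>v\<in>?V. face i v * tensor_eval s v))"
      by (simp only: sum_distrib_left sum_distrib_right mult.assoc) (rule sum.swap)
    also have "\<dots> = (\<Sum>i<Suc n. (-1) ^ i * (?Q i + ?Q (Suc i)))"
      using len tensor_eval_face[OF eig len]
      by (intro sum.cong) (simp_all add: face_def sum_delta_mult finite_lists_of_length)
    finally show ?thesis .
  qed
  have cyclic: "(\<Sum>v\<in>?V. cyclic v * tensor_eval s v) = ?Q (Suc n) + ?Q 0"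
    using len tensor_eval_cyclic_face[OF eig len]
    by (simp add: cyclic_def sum_delta_mult finite_lists_of_length)
  have "hbd_coeff (triv_ext c) (Suc n) w v
      = (\<Sum>i<Suc n. (-1) ^ i * face i v) + (-1) ^ Suc n * cyclic v" for v
    by (simp add: hbd_coeff_def face_def cyclic_def del: sum.lessThan_Suc)
  hence "(\<Sum>v\<in>?V. hbd_coeff (triv_ext c) (Suc n) w v * tensor_eval s v)
      = (\<Sum>v\<in>?V. (\<Sum>i<Suc n. (-1) ^ i * face i v) * tensor_eval s v)
        + (-1) ^ Suc n * (\<Sum>v\<in>?V. cyclic v * tensor_eval s v)"
    by (simp only: distrib_right sum.distrib sum_distrib_left mult.assoc)
  also have "\<dots> = (\<Sum>i<Suc n. (-1) ^ i * (?Q i + ?Q (Suc i))) + (-1) ^ Suc n * (?Q (Suc n) + ?Q 0)"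
    by (simp only: faces cyclic)
  also have "\<dots> = 0"
    using \<open>even n\<close> by (simp only: sum_alternating_telescope) (simp add: algebra_simps)
  finally show ?thesis .
qed

lemma tensor_eval_hbd:
  assumes "two_sided_eigenvector c s h" "even n"
  shows "(\<Sum>v | length v = Suc n. hbd (triv_ext c) (Suc n) y v * tensor_eval s v) = 0"
proof -
  let ?V = "{v :: ('i + 'i) list. length v = Suc n}"
  let ?W = "{w :: ('i + 'i) list. length w = Suc (Suc n)}"
  have "(\<Sum>v\<in>?V. hbd (triv_ext c) (Suc n) y v * tensor_eval s v)
      = (\<Sum>v\<in>?V. \<Sum>w\<in>?W. y w * (hbd_coeff (triv_ext c) (Suc n) w v * tensor_eval s v))"
    by (intro sum.cong) (auto simp: hbd_def sum_distrib_right mult.assoc)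
  also have "\<dots> = (\<Sum>w\<in>?W. y w * (\<Sum>v\<in>?V. hbd_coeff (triv_ext c) (Suc n) w v * tensor_eval s v))"
    by (subst sum.swap) (simp add: sum_distrib_left)
  also have "\<dots> = 0"
    using tensor_eval_hbd_coeff[OF assms(1) _ assms(2)] by simp
  finally show ?thesis .
qed

lemma hbd_coeff_replicate_Inr: "hbd_coeff (triv_ext c) n (replicate (Suc n) (Inr j)) v = 0"
  unfolding hbd_coeff_def by (simp add: sum.neutral del: replicate_Suc)

lemma HH_nonzero_triv_ext:
  fixes c :: "'i::finite \<Rightarrow> 'i \<Rightarrow> 'i \<Rightarrow> 'k::field"
  assumes "two_sided_eigenvector c s h" "s j \<noteq> 0" "even n"
  shows "HH_nonzero (triv_ext c) n"
proof -
  define r where "r = replicate (Suc n) (Inr j :: 'i + 'i)"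
  define z where "z w = (if w = r then 1 else 0 :: 'k)" for w
  have delta: "(\<Sum>w | length w = Suc n. z w * f w) = f r" for f :: "('i + 'i) list \<Rightarrow> 'k"
    by (simp add: z_def r_def if_distrib[of "\<lambda>x. x * _"] finite_lists_of_length cong: if_cong)
  have "z \<in> hchains n" by (simp add: hchains_def z_def r_def)
  moreover have "hbd (triv_ext c) n z = (\<lambda>_. 0)"
  proof
    fix v
    show "hbd (triv_ext c) n z v = 0"
      using delta[of "\<lambda>w. hbd_coeff (triv_ext c) n w v"] hbd_coeff_replicate_Inr[of c n j v]
      by (simp add: hbd_def r_def del: replicate_Suc)
  qed
  moreover have "hbd (triv_ext c) (Suc n) y \<noteq> z" for y
  proof
    assume "hbd (triv_ext c) (Suc n) y = z"
    hence "(\<Sum>v | length v = Suc n. z v * tensor_eval s v) = 0"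
      using tensor_eval_hbd[OF assms(1,3), of y] by simp
    moreover have "(\<Sum>v | length v = Suc n. z v * tensor_eval s v) = s j ^ Suc n"
      by (simp add: delta r_def tensor_eval_def)
    ultimately show False using assms(2) by simp
  qed
  ultimately show ?thesis unfolding HH_nonzero_def by blast
qed

lemma HHdim_infinite_triv_ext:
  assumes "two_sided_eigenvector c s h" "s \<noteq> 0"
  shows "HHdim_infinite (triv_ext c)"
proof -
  obtain j where "s j \<noteq> 0" using assms(2) by (auto simp: fun_eq_iff)
  hence "HH_nonzero (triv_ext c) (2 * N)" for N using HH_nonzero_triv_ext[OF assms(1)] by simp
  thus ?thesis unfolding HHdim_infinite_def by (metis le_add2 mult_2)
qed

theorem theorem3p2:
  fixes c :: "'i::finite \<Rightarrow> 'i \<Rightarrow> 'i \<Rightarrow> 'k::alg_closed_field"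
  assumes "local_algebra c"
  shows "HHdim_infinite (triv_ext c)"
proof -
  obtain s h where "s \<noteq> 0" "two_sided_eigenvector c s h"
    using local_algebra_two_sided_eigenvector[OF assms] .
  thus ?thesis by (intro HHdim_infinite_triv_ext)
qed

end
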